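(* For any $i\in\{0,\dots,m-1\}$ such that $B_i\le\kappa B_{i+1}$, at least one of the following holds: (i) $\{\operatorname{pr}(b_1),\dots,\operatorname{pr}(b_i)\}$ is a basis of $\Lambda$; (ii) $\Lambda$ is not generated by elements of norm $\le\kappa B_{i+1}$; (iii) $\varphi(\beta)\le B_i$.
   Context: Let $m\ge2$ and $1\le p\le m$ be integers and $P\in\mathbb{R}^{m\times p}$. Vectors of $\mathbb{Z}^m$, $\mathbb{R}^m$ are row vectors and all norms $\|\cdot\|$ are Euclidean. Let $\Lambda=\{x\in\mathbb{Z}^m : xP=0\}$. For $B\ge0$ let $\varepsilon(B)=\min\{\|uP\| : u\in\mathbb{Z}^m,\ \|u\|\le B,\ uP\neq0\}$ (with $\varepsilon(B)=+\infty$ if this set is empty), and for $s\ge0$ let $\varphi(s)=\sup\{B\ge0 : mB/\varepsilon(B)\le s\}\in[0,+\infty]$, with the convention $mB/(+\infty)=0$. Let $\beta>0$ and let $P_\beta\in\mathbb{Z}^{m\times p}$ be such that every entry of $P_\beta-\beta P$ lies in $[-\tfrac12,\tfrac12]$. Let $R\subset\mathbb{Z}^{p+m}$ be the lattice spanned by the rows of the $m\times(p+m)$ matrix $[\,P_\beta\mid I_m\,]$, and let $b_1,\dots,b_m$ be a basis of $R$ that is LLL-reduced (Lenstra–Lenstra–Lovász, with parameter $3/4$) and satisfies $\|b_1\|\le\dots\le\|b_m\|$. Set $B_0=0$, $B_i=\|b_i\|$ for $1\le i\le m$, $\kappa=m^{-1}2^{-(m+1)/2}$, and let $\operatorname{pr}\colon\mathbb{Z}^{p+m}\to\mathbb{Z}^m$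 be the projection onto the last $m$ coordinates. *)

theory Defs
  imports Complex_Main "HOL-Library.Extended_Real"
begin

text \<open>Integer / real vectors of dimension n are represented as functions on nat;
  integer vectors of Z^n are required to vanish at indices \<ge> n.
  Matrices are functions nat => nat => _ (row index, column index).\<close>

definition zvecs :: "nat \<Rightarrow> (nat \<Rightarrow> int) set" where
  "zvecs n = {x. \<forall>k\<ge>n. x k = 0}"

definition inorm :: "nat \<Rightarrow> (nat \<Rightarrow> int) \<Rightarrow> real" where
  "inorm n x = sqrt (\<Sum>k<n. (real_of_int (x k))^2)"

definition rinner :: "nat \<Rightarrow> (nat \<Rightarrow> real) \<Rightarrow> (nat \<Rightarrow> real) \<Rightarrow> real" where
  "rinner n x y = (\<Sum>k<n. x k * y k)"

definition rnorm :: "nat \<Rightarrow> (nat \<Rightarrow> real) \<Rightarrow> real" where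
  "rnorm n x = sqrt (rinner n x x)"

definition vecmat :: "nat \<Rightarrow> nat \<Rightarrow> (nat \<Rightarrow> nat \<Rightarrow> real) \<Rightarrow> (nat \<Rightarrow> int) \<Rightarrow> (nat \<Rightarrow> real)" where
  "vecmat m p P u = (\<lambda>j. if j < p then (\<Sum>i<m. real_of_int (u i) * P i j) else 0)"

definition Lam :: "nat \<Rightarrow> nat \<Rightarrow> (nat \<Rightarrow> nat \<Rightarrow> real) \<Rightarrow> (nat \<Rightarrow> int) set" where
  "Lam m p P = {x \<in> zvecs m. vecmat m p P x = (\<lambda>_. 0)}"

text \<open>epsilon(B) as an extended real; the infimum of the empty set is +infinity.
  (The minimum is attained since the set is finite.)\<close>
definition eps :: "nat \<Rightarrow> nat \<Rightarrow> (nat \<Rightarrow> nat \<Rightarrow> real) \<Rightarrow> real \<Rightarrow> ereal" where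
  "eps m p P B = Inf (ereal ` {rnorm p (vecmat m p P u) | u.
      u \<in> zvecs m \<and> inorm m u \<le> B \<and> vecmat m p P u \<noteq> (\<lambda>_. 0)})"

definition phi :: "nat \<Rightarrow> nat \<Rightarrow> (nat \<Rightarrow> nat \<Rightarrow> real) \<Rightarrow> real \<Rightarrow> ereal" where
  "phi m p P s = Sup (ereal ` {B. B \<ge> 0 \<and>
      (if eps m p P B = \<infinity> then 0 else real m * B / real_of_ereal (eps m p P B)) \<le> s})"

definition zspan :: "(nat \<Rightarrow> int) set \<Rightarrow> (nat \<Rightarrow> int) set" where
  "zspan S = {(\<lambda>k. \<Sum>v\<in>F. c v * v k) | F c. finite F \<and> F \<subseteq> S}"

definition zindep :: "nat set \<Rightarrow> (nat \<Rightarrow> nat \<Rightarrow> int) \<Rightarrow> bool" where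
  "zindep I v = (\<forall>c. (\<lambda>k. \<Sum>i\<in>I. c i * v i k) = (\<lambda>_. 0) \<longrightarrow> (\<forall>i\<in>I. c i = 0))"

definition is_zbasis :: "nat set \<Rightarrow> (nat \<Rightarrow> nat \<Rightarrow> int) \<Rightarrow> (nat \<Rightarrow> int) set \<Rightarrow> bool" where
  "is_zbasis I v L = ((\<forall>i\<in>I. v i \<in> L) \<and> zindep I v \<and> L = zspan (v ` I))"

text \<open>Rows of [P_beta | I_m] in Z^(p+m) and the lattice R they span.\<close>
definition Rrow :: "nat \<Rightarrow> (nat \<Rightarrow> nat \<Rightarrow> int) \<Rightarrow> nat \<Rightarrow> (nat \<Rightarrow> int)" where
  "Rrow p Pb i = (\<lambda>k. if k < p then Pb i k else if k = p + i then 1 else 0)"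

definition lattice_R :: "nat \<Rightarrow> nat \<Rightarrow> (nat \<Rightarrow> nat \<Rightarrow> int) \<Rightarrow> (nat \<Rightarrow> int) set" where
  "lattice_R m p Pb = zspan (Rrow p Pb ` {..<m})"

primrec gso_app :: "nat \<Rightarrow> (nat \<Rightarrow> real) list \<Rightarrow> (nat \<Rightarrow> real) list \<Rightarrow> (nat \<Rightarrow> real) list" where
  "gso_app n acc [] = acc"
| "gso_app n acc (v # vs) =
     gso_app n (acc @ [(\<lambda>k. v k - (\<Sum>w\<leftarrow>acc. (rinner n v w / rinner n w w) * w k))]) vs"

definition gso :: "nat \<Rightarrow> (nat \<Rightarrow> real) list \<Rightarrow> (nat \<Rightarrow> real) list" where
  "gso n vs = gso_app n [] vs"

definition gs_mu :: "nat \<Rightarrow> (nat \<Rightarrow> real) list \<Rightarrow> nat \<Rightarrow> nat \<Rightarrow> real" where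
  "gs_mu n vs i j = rinner n (vs ! i) (gso n vs ! j) / rinner n (gso n vs ! j) (gso n vs ! j)"

definition lll_reduced :: "nat \<Rightarrow> real \<Rightarrow> (nat \<Rightarrow> real) list \<Rightarrow> bool" where
  "lll_reduced n delta vs =
    ((\<forall>i<length vs. \<forall>j<i. \<bar>gs_mu n vs i j\<bar> \<le> 1/2) \<and>
     (\<forall>i. 0 < i \<and> i < length vs \<longrightarrow>
        delta * (rnorm n (gso n vs ! (i-1)))^2 \<le>
        (rnorm n (\<lambda>k. (gso n vs ! i) k + gs_mu n vs i (i-1) * (gso n vs ! (i-1)) k))^2))"

text \<open>B_0 = 0, B_i = ||b_i|| (basis indexed 1..m, vectors in Z^n).\<close>
definition Bseq :: "nat \<Rightarrow> (nat \<Rightarrow> nat \<Rightarrow> int) \<Rightarrow> nat \<Rightarrow> real" where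
  "Bseq n b i = (if i = 0 then 0 else inorm n (b i))"

definition kappa :: "nat \<Rightarrow> real" where
  "kappa m = 1 / real m * 2 powr (- (real m + 1) / 2)"

definition pr :: "nat \<Rightarrow> nat \<Rightarrow> (nat \<Rightarrow> int) \<Rightarrow> (nat \<Rightarrow> int)" where
  "pr m p v = (\<lambda>k. if k < m then v (p + k) else 0)"

end

theory Submission
  imports Defs "HOL-Analysis.L2_Norm"
begin

text \<open>
  Identify \<open>\<int>^m\<close> with \<open>R\<close> via \<open>a \<mapsto> (a P_\<beta> | a)\<close>, whose inverse is \<open>pr\<close>.
  If (iii) fails there is \<open>B > B_i\<close> with \<open>m B \<le> \<beta> \<epsilon>(B)\<close>. For \<open>j \<le> i\<close> write
  \<open>b_j = (v P_\<beta> | v)\<close>; since \<open>\<beta> P\<close> is within \<open>1/2\<close> of \<open>P_\<beta>\<close> entrywise,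
  \<open>\<beta> \<parallel>vP\<parallel> \<le> \<parallel>b_j\<parallel> + (m/2) \<parallel>v\<parallel> \<le> m B_i < m B\<close>, and by the choice of \<open>B\<close> this
  forces \<open>vP = 0\<close>, i.e. \<open>pr(b_j) \<in> \<Lambda>\<close>.

  Conversely, \<open>u \<in> \<Lambda>\<close> with \<open>\<parallel>u\<parallel> \<le> \<kappa> B_(i+1)\<close> lifts to \<open>(u P_\<beta> | u) \<in> R\<close>, of squared
  norm at most \<open>(1 + m^2/4) \<parallel>u\<parallel>^2 < 2^(1-m) B_(i+1)^2\<close>. In an LLL-reduced basis a
  lattice vector with a nonzero coefficient on \<open>b_J\<close> has squared norm at least
  \<open>2^(1-J) \<parallel>b_J\<parallel>^2\<close> (compare both with the Gram--Schmidt vector \<open>b_J*\<close>), so the lift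
  only involves \<open>b_1, \<dots>, b_i\<close>. If (ii) fails these \<open>u\<close> generate \<open>\<Lambda>\<close>, hence so do
  \<open>pr(b_1), \<dots>, pr(b_i)\<close>; they are independent because \<open>pr\<close> is injective on \<open>R\<close>.
\<close>

lemma rinner_commute: "rinner n x y = rinner n y x"
  unfolding rinner_def by (simp add: mult.commute)

lemma rinner_add_left: "rinner n (\<lambda>k. f k + g k) y = rinner n f y + rinner n g y"
  unfolding rinner_def by (simp add: algebra_simps sum.distrib)

lemma rinner_diff_left: "rinner n (\<lambda>k. f k - g k) y = rinner n f y - rinner n g y"
  unfolding rinner_def by (simp add: algebra_simps sum_subtractf)

lemma rinner_scale_left: "rinner n (\<lambda>k. c * f k) y = c * rinner n f y"
  unfolding rinner_def by (simp add: sum_distrib_left mult.assoc)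

lemma rinner_sum_left:
  "rinner n (\<lambda>k. \<Sum>l\<in>L. a l * h l k) y = (\<Sum>l\<in>L. a l * rinner n (h l) y)"
  unfolding rinner_def
  by (simp add: sum_distrib_left sum_distrib_right sum.swap[of _ L] mult.assoc)

lemma rinner_self_nonneg: "0 \<le> rinner n x x"
  unfolding rinner_def by (simp add: sum_nonneg)

lemma rinner_eq_0_if_self_eq_0: "rinner n w w = 0 \<Longrightarrow> rinner n y w = 0"
  unfolding rinner_def by (subst (asm) sum_nonneg_eq_0_iff) auto

lemma rinner_self_eq_L2_set: "rinner n x x = (L2_set x {..<n})\<^sup>2"
  unfolding rinner_def L2_set_def by (simp add: sum_nonneg power2_eq_square)

lemma rnorm_eq_L2_set: "rnorm n x = L2_set x {..<n}"
  unfolding rnorm_def rinner_self_eq_L2_set by simp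

lemma rnorm_square: "(rnorm n x)\<^sup>2 = rinner n x x"
  unfolding rnorm_def using rinner_self_nonneg[of n x] by simp

lemma rinner_Cauchy_Schwarz: "(rinner n x y)\<^sup>2 \<le> rinner n x x * rinner n y y"
proof -
  have "\<bar>rinner n x y\<bar> \<le> (\<Sum>k<n. \<bar>x k\<bar> * \<bar>y k\<bar>)"
    unfolding rinner_def by (rule order_trans[OF sum_abs]) (simp add: abs_mult)
  also have "\<dots> \<le> L2_set x {..<n} * L2_set y {..<n}"
    by (rule L2_set_mult_ineq)
  finally have "\<bar>rinner n x y\<bar>\<^sup>2 \<le> (L2_set x {..<n} * L2_set y {..<n})\<^sup>2"
    by (rule power_mono) simp
  then show ?thesis
    by (simp add: rinner_self_eq_L2_set power_mult_distrib)
qed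

section \<open>Gram--Schmidt orthogonalisation\<close>

lemma length_gso_app: "length (gso_app n acc vs) = length acc + length vs"
  by (induction vs arbitrary: acc) auto

lemma gso_app_nth_prefix: "t < length acc \<Longrightarrow> gso_app n acc vs ! t = acc ! t"
  by (induction vs arbitrary: acc) (auto simp: nth_append)

lemma gso_app_nth:
  assumes "t < length vs"
  shows "gso_app n acc vs ! (length acc + t) =
    (\<lambda>k. (vs ! t) k - (\<Sum>l<length acc + t.
        (rinner n (vs ! t) (gso_app n acc vs ! l) /
         rinner n (gso_app n acc vs ! l) (gso_app n acc vs ! l)) * (gso_app n acc vs ! l) k))"
  using assms
proof (induction vs arbitrary: acc t)
  case Nil
  then show ?case by simp
next
  case (Cons v vs)
  define new where "new = (\<lambda>k. v k - (\<Sum>w\<leftarrow>acc. (rinner n v w / rinner n w w) * w k))"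
  have unfold: "gso_app n acc (v # vs) = gso_app n (acc @ [new]) vs"
    by (simp add: new_def)
  show ?case
  proof (cases t)
    case 0
    let ?G = "gso_app n (acc @ [new]) vs"
    have prefix: "?G ! l = acc ! l" if "l < length acc" for l
      using that by (simp add: gso_app_nth_prefix nth_append)
    have "?G ! length acc = new"
      by (simp add: gso_app_nth_prefix)
    also have "new = (\<lambda>k. v k - (\<Sum>l<length acc.
        (rinner n v (?G ! l) / rinner n (?G ! l) (?G ! l)) * (?G ! l) k))"
    proof
      fix k
      have "new k = v k - (\<Sum>w\<leftarrow>acc. (rinner n v w / rinner n w w) * w k)"
        by (simp add: new_def)
      also have "(\<Sum>w\<leftarrow>acc. (rinner n v w / rinner n w w) * w k) = (\<Sum>l<length acc.
          (rinner n v (?G ! l) / rinner n (?G ! l) (?G ! l)) * (?G ! l) k)"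
        by (simp add: sum_list_sum_nth atLeast0LessThan prefix)
      finally show "new k = v k - (\<Sum>l<length acc.
          (rinner n v (?G ! l) / rinner n (?G ! l) (?G ! l)) * (?G ! l) k)" .
    qed
    finally show ?thesis
      unfolding unfold 0 by simp
  next
    case (Suc t')
    with Cons.prems have "t' < length vs" by simp
    from Cons.IH[OF this, of "acc @ [new]"] show ?thesis
      unfolding unfold using Suc by simp
  qed
qed

lemma length_gso: "length (gso n vs) = length vs"
  by (simp add: gso_def length_gso_app)

lemma gso_nth:
  "t < length vs \<Longrightarrow>
    gso n vs ! t = (\<lambda>k. (vs ! t) k - (\<Sum>l<t. gs_mu n vs t l * (gso n vs ! l) k))"
  using gso_app_nth[of t vs n "[]"] by (simp add: gso_def gs_mu_def)

lemma nth_eq_gso_plus: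
  "t < length vs \<Longrightarrow>
    vs ! t = (\<lambda>k. (gso n vs ! t) k + (\<Sum>l<t. gs_mu n vs t l * (gso n vs ! l) k))"
  by (simp add: gso_nth)

lemma gs_mu_mult:
  "gs_mu n vs t l * rinner n (gso n vs ! l) (gso n vs ! l) = rinner n (vs ! t) (gso n vs ! l)"
  unfolding gs_mu_def
  using rinner_eq_0_if_self_eq_0[of n "gso n vs ! l" "vs ! t"] by auto

lemma gso_orthogonal:
  assumes "t < length vs" "s < length vs" "s \<noteq> t"
  shows "rinner n (gso n vs ! t) (gso n vs ! s) = 0"
proof -
  have lt: "rinner n (gso n vs ! t) (gso n vs ! s) = 0" if "t < length vs" "s < t" for t s
    using that
  proof (induction t arbitrary: s rule: less_induct)
    case (less t)
    let ?G = "gso n vs"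
    have orth: "rinner n (?G ! l) (?G ! s) = 0" if "l < t" "l \<noteq> s" for l
    proof (cases "s < l")
      case True
      then show ?thesis using that less by simp
    next
      case False
      then have "rinner n (?G ! s) (?G ! l) = 0" using that less by simp
      then show ?thesis by (simp add: rinner_commute)
    qed
    have "rinner n (?G ! t) (?G ! s)
        = rinner n (vs ! t) (?G ! s) - (\<Sum>l<t. gs_mu n vs t l * rinner n (?G ! l) (?G ! s))"
      by (subst gso_nth[OF less.prems(1)]) (simp add: rinner_diff_left rinner_sum_left)
    also have "(\<Sum>l<t. gs_mu n vs t l * rinner n (?G ! l) (?G ! s))
        = (\<Sum>l<t. if l = s then rinner n (vs ! t) (?G ! s) else 0)"
      by (rule sum.cong) (auto simp: orth gs_mu_mult)
    also have "\<dots> = rinner n (vs ! t) (?G ! s)"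
      using less.prems by simp
    finally show ?case by simp
  qed
  show ?thesis
  proof (cases "s < t")
    case False
    then have "rinner n (gso n vs ! s) (gso n vs ! t) = 0" using assms lt[of s t] by simp
    then show ?thesis by (simp add: rinner_commute)
  qed (use assms lt in simp)
qed

lemma rinner_nth_gso:
  assumes "t < length vs" "s \<le> t"
  shows "rinner n (vs ! s) (gso n vs ! t) =
    (if s = t then rinner n (gso n vs ! t) (gso n vs ! t) else 0)"
proof -
  have "rinner n (vs ! s) (gso n vs ! t)
      = rinner n (gso n vs ! s) (gso n vs ! t)
        + (\<Sum>l<s. gs_mu n vs s l * rinner n (gso n vs ! l) (gso n vs ! t))"
    using assms nth_eq_gso_plus[of s vs n] by (simp add: rinner_add_left rinner_sum_left)
  also have "(\<Sum>l<s. gs_mu n vs s l * rinner n (gso n vs ! l) (gso n vs ! t)) = 0"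
    using assms by (intro sum.neutral) (auto simp: gso_orthogonal)
  finally show ?thesis
    using assms gso_orthogonal[of s vs t n] by auto
qed

lemma rinner_nth_self:
  assumes "t < length vs"
  shows "rinner n (vs ! t) (vs ! t) = rinner n (gso n vs ! t) (gso n vs ! t)
    + (\<Sum>l<t. (gs_mu n vs t l)\<^sup>2 * rinner n (gso n vs ! l) (gso n vs ! l))"
proof -
  have "rinner n (vs ! t) (vs ! t) = rinner n
      (\<lambda>k. (gso n vs ! t) k + (\<Sum>l<t. gs_mu n vs t l * (gso n vs ! l) k)) (vs ! t)"
    by (rule arg_cong[where f = "\<lambda>x. rinner n x (vs ! t)", OF nth_eq_gso_plus[OF assms]])
  also have "\<dots> = rinner n (gso n vs ! t) (vs ! t)
      + (\<Sum>l<t. gs_mu n vs t l * rinner n (gso n vs ! l) (vs ! t))"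
    by (simp only: rinner_add_left rinner_sum_left)
  also have "rinner n (gso n vs ! t) (vs ! t) = rinner n (gso n vs ! t) (gso n vs ! t)"
    using rinner_nth_gso[OF assms, of t n] rinner_commute[of n "gso n vs ! t" "vs ! t"] by simp
  also have "(\<Sum>l<t. gs_mu n vs t l * rinner n (gso n vs ! l) (vs ! t))
      = (\<Sum>l<t. (gs_mu n vs t l)\<^sup>2 * rinner n (gso n vs ! l) (gso n vs ! l))"
  proof (rule sum.cong[OF refl])
    fix l
    show "gs_mu n vs t l * rinner n (gso n vs ! l) (vs ! t)
        = (gs_mu n vs t l)\<^sup>2 * rinner n (gso n vs ! l) (gso n vs ! l)"
      using gs_mu_mult[of n vs t l] rinner_commute[of n "gso n vs ! l" "vs ! t"]
      by (simp add: power2_eq_square)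
  qed
  finally show ?thesis .
qed

section \<open>LLL-reduced bases\<close>

lemma lll_gs_mu_square_le:
  assumes "lll_reduced n (3/4) vs" "j < t" "t < length vs"
  shows "(gs_mu n vs t j)\<^sup>2 \<le> 1/4"
proof -
  have "\<bar>gs_mu n vs t j\<bar> \<le> 1/2"
    using assms unfolding lll_reduced_def by auto
  then have "\<bar>gs_mu n vs t j\<bar>\<^sup>2 \<le> (1/2)\<^sup>2"
    by (rule power_mono) simp
  then show ?thesis by (simp add: power2_eq_square)
qed

lemma lll_gso_sqnorm_step:
  assumes lll: "lll_reduced n (3/4) vs" and t: "0 < t" "t < length vs"
  shows "rinner n (gso n vs ! (t - 1)) (gso n vs ! (t - 1))
    \<le> 2 * rinner n (gso n vs ! t) (gso n vs ! t)"
proof -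
  define g where "g = gso n vs ! t"
  define g' where "g' = gso n vs ! (t - 1)"
  define \<mu> where "\<mu> = gs_mu n vs t (t - 1)"
  have orth: "rinner n g' g = 0" "rinner n g g' = 0"
    unfolding g_def g'_def using t by (auto intro: gso_orthogonal)
  have "rinner n (\<lambda>k. g k + \<mu> * g' k) (\<lambda>k. g k + \<mu> * g' k) = rinner n g g + \<mu>\<^sup>2 * rinner n g' g'"
    using orth rinner_commute[of n g "\<lambda>k. g k + \<mu> * g' k"]
      rinner_commute[of n g' "\<lambda>k. g k + \<mu> * g' k"]
    by (simp add: rinner_add_left rinner_scale_left power2_eq_square)
  moreover have "3/4 * (rnorm n g')\<^sup>2 \<le> (rnorm n (\<lambda>k. g k + \<mu> * g' k))\<^sup>2"
    using lll t unfolding lll_reduced_def g_def g'_def \<mu>_def by auto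
  moreover have "\<mu>\<^sup>2 * rinner n g' g' \<le> 1/4 * rinner n g' g'"
    using lll_gs_mu_square_le[OF lll _ t(2), of "t - 1"] t(1) unfolding \<mu>_def
    by (intro mult_right_mono rinner_self_nonneg) auto
  ultimately show ?thesis
    unfolding g_def g'_def rnorm_square by linarith
qed

lemma lll_gso_sqnorm_le:
  assumes lll: "lll_reduced n (3/4) vs" and "l \<le> t" "t < length vs"
  shows "rinner n (gso n vs ! l) (gso n vs ! l) \<le> 2 ^ (t - l) * rinner n (gso n vs ! t) (gso n vs ! t)"
  using assms(2,3)
proof (induction t rule: dec_induct)
  case base
  then show ?case by simp
next
  case (step t)
  have "rinner n (gso n vs ! l) (gso n vs ! l) \<le> 2 ^ (t - l) * rinner n (gso n vs ! t) (gso n vs ! t)"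
    using step by simp
  also have "\<dots> \<le> 2 ^ (t - l) * (2 * rinner n (gso n vs ! Suc t) (gso n vs ! Suc t))"
    using lll_gso_sqnorm_step[OF lll, of "Suc t"] step.prems by (intro mult_left_mono) auto
  also have "\<dots> = 2 ^ (Suc t - l) * rinner n (gso n vs ! Suc t) (gso n vs ! Suc t)"
    using step.hyps by (simp add: Suc_diff_le)
  finally show ?case .
qed

lemma sum_power2_diff: "(\<Sum>l<t. (2::real) ^ (t - l)) = 2 ^ (t + 1) - 2"
proof (induction t)
  case (Suc t)
  have "(\<Sum>l<Suc t. (2::real) ^ (Suc t - l)) = (\<Sum>l<Suc t. 2 * 2 ^ (t - l))"
    by (rule sum.cong) (auto simp: Suc_diff_le)
  also have "\<dots> = 2 * (\<Sum>l<t. 2 ^ (t - l)) + 2"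
    by (simp add: sum_distrib_left)
  finally show ?case
    using Suc by simp
qed simp

lemma lll_sqnorm_le_gso:
  assumes lll: "lll_reduced n (3/4) vs" and t: "t < length vs"
  shows "rinner n (vs ! t) (vs ! t) \<le> 2 ^ t * rinner n (gso n vs ! t) (gso n vs ! t)"
proof -
  let ?G = "\<lambda>l. rinner n (gso n vs ! l) (gso n vs ! l)"
  have "(\<Sum>l<t. (gs_mu n vs t l)\<^sup>2 * ?G l) \<le> (\<Sum>l<t. 1/4 * (2 ^ (t - l) * ?G t))"
    using lll_gs_mu_square_le[OF lll _ t] lll_gso_sqnorm_le[OF lll _ t]
    by (intro sum_mono mult_mono) (auto simp: rinner_self_nonneg)
  also have "\<dots> = 1/4 * (\<Sum>l<t. 2 ^ (t - l)) * ?G t"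
    by (simp add: sum_distrib_left sum_distrib_right mult.assoc)
  also have "\<dots> = 1/4 * (2 ^ (t + 1) - 2) * ?G t"
    by (simp only: sum_power2_diff)
  also have "\<dots> \<le> (2 ^ t - 1) * ?G t"
    by (intro mult_right_mono rinner_self_nonneg) simp
  finally show ?thesis
    using rinner_nth_self[OF t, of n] by (simp add: algebra_simps)
qed

lemma gso_sqnorm_le_combination:
  assumes J: "J < length vs" and c_zero: "\<forall>t. J < t \<and> t < length vs \<longrightarrow> c t = 0"
    and c_J: "1 \<le> \<bar>c J\<bar>"
  shows "rinner n (gso n vs ! J) (gso n vs ! J)
    \<le> rinner n (\<lambda>k. \<Sum>t<length vs. c t * (vs ! t) k) (\<lambda>k. \<Sum>t<length vs. c t * (vs ! t) k)"
    (is "_ \<le> rinner n ?x ?x")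
proof -
  let ?G = "rinner n (gso n vs ! J) (gso n vs ! J)"
  \<comment> \<open>the \<open>J\<close>-th Gram--Schmidt coordinate of \<open>?x\<close> is \<open>c J\<close>; conclude by Cauchy--Schwarz\<close>
  have "rinner n ?x (gso n vs ! J) = (\<Sum>t<length vs. c t * rinner n (vs ! t) (gso n vs ! J))"
    by (rule rinner_sum_left)
  also have "\<dots> = (\<Sum>t<length vs. if t = J then c J * ?G else 0)"
  proof (rule sum.cong[OF refl])
    fix t assume "t \<in> {..<length vs}"
    then show "c t * rinner n (vs ! t) (gso n vs ! J) = (if t = J then c J * ?G else 0)"
      using c_zero rinner_nth_gso[OF J, of t n] by (cases "t \<le> J") auto
  qed
  also have "\<dots> = c J * ?G"
    using J by simp
  finally have "(c J * ?G)\<^sup>2 \<le> rinner n ?x ?x * ?G"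
    using rinner_Cauchy_Schwarz[of n ?x "gso n vs ! J"] by simp
  moreover have "?G * ?G \<le> (c J * ?G)\<^sup>2"
  proof -
    have "1 \<le> \<bar>c J\<bar>\<^sup>2"
      using c_J by (rule one_le_power)
    then have "1 * (?G * ?G) \<le> \<bar>c J\<bar>\<^sup>2 * (?G * ?G)"
      by (rule mult_right_mono) simp
    then show ?thesis
      by (simp add: power2_eq_square mult_ac)
  qed
  ultimately have "?G * ?G \<le> rinner n ?x ?x * ?G"
    by linarith
  then show ?thesis
    using rinner_self_nonneg[of n ?x] rinner_self_nonneg[of n "gso n vs ! J"]
    by (cases "?G = 0") (auto simp: mult_le_cancel_right)
qed

lemma lll_sqnorm_le_combination:
  assumes "lll_reduced n (3/4) vs" "J < length vs"
    and "\<forall>t. J < t \<and> t < length vs \<longrightarrow> c t = 0" "1 \<le> \<bar>c J\<bar>"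
  shows "rinner n (vs ! J) (vs ! J)
    \<le> 2 ^ J * rinner n (\<lambda>k. \<Sum>t<length vs. c t * (vs ! t) k) (\<lambda>k. \<Sum>t<length vs. c t * (vs ! t) k)"
  using lll_sqnorm_le_gso[OF assms(1,2)] gso_sqnorm_le_combination[OF assms(2-4), of n]
  by (meson order_trans mult_left_mono zero_le_power zero_le_numeral)

section \<open>Integer spans\<close>

lemma zspan_image_iff:
  assumes I: "finite I"
  shows "x \<in> zspan (f ` I) \<longleftrightarrow> (\<exists>a. x = (\<lambda>k. \<Sum>j\<in>I. a j * f j k))"
proof
  assume "x \<in> zspan (f ` I)"
  then obtain F c where x: "x = (\<lambda>k. \<Sum>v\<in>F. c v * v k)" and F: "F \<subseteq> f ` I"
    unfolding zspan_def by blast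
  define h where "h = inv_into I f"
  have fh: "f (h w) = w" and hI: "h w \<in> I" if "w \<in> F" for w
    using F that unfolding h_def by (auto simp: f_inv_into_f inv_into_into)
  have inj: "inj_on h F"
    by (metis fh inj_onI)
  define a where "a j = (if j \<in> h ` F then c (f j) else 0)" for j
  have "(\<Sum>v\<in>F. c v * v k) = (\<Sum>j\<in>I. a j * f j k)" for k
  proof -
    have "(\<Sum>v\<in>F. c v * v k) = (\<Sum>v\<in>F. c (f (h v)) * f (h v) k)"
      by (rule sum.cong) (auto simp: fh)
    also have "\<dots> = (\<Sum>j\<in>h ` F. c (f j) * f j k)"
      by (rule sum.reindex[OF inj, symmetric, unfolded comp_def])
    also have "\<dots> = (\<Sum>j\<in>I. if j \<in> h ` F then c (f j) * f j k else 0)"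
      using hI sum.inter_restrict[OF I, of "\<lambda>j. c (f j) * f j k" "h ` F"]
      by (simp add: Int_absorb1 image_subset_iff)
    also have "\<dots> = (\<Sum>j\<in>I. a j * f j k)"
      unfolding a_def by (rule sum.cong) auto
    finally show ?thesis .
  qed
  then show "\<exists>a. x = (\<lambda>k. \<Sum>j\<in>I. a j * f j k)"
    using x by auto
next
  assume "\<exists>a. x = (\<lambda>k. \<Sum>j\<in>I. a j * f j k)"
  then obtain a where x: "x = (\<lambda>k. \<Sum>j\<in>I. a j * f j k)" by blast
  define c where "c w = (\<Sum>j\<in>{j \<in> I. f j = w}. a j)" for w
  have "(\<Sum>j\<in>I. a j * f j k) = (\<Sum>w\<in>f ` I. c w * w k)" for k
  proof -
    have "(\<Sum>j\<in>I. a j * f j k) = (\<Sum>w\<in>f ` I. \<Sum>j\<in>{j \<in> I. f j = w}. a j * f j k)"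
      by (rule sum.image_gen[OF I])
    also have "\<dots> = (\<Sum>w\<in>f ` I. c w * w k)"
      unfolding c_def sum_distrib_right by (rule sum.cong) (auto intro!: sum.cong)
    finally show ?thesis .
  qed
  then show "x \<in> zspan (f ` I)"
    unfolding zspan_def x using I by blast
qed

lemma zspan_subset_zspan_image:
  assumes I: "finite I" and S: "S \<subseteq> zspan (f ` I)"
  shows "zspan S \<subseteq> zspan (f ` I)"
proof
  fix x assume "x \<in> zspan S"
  then obtain F c where x: "x = (\<lambda>k. \<Sum>v\<in>F. c v * v k)" and F: "F \<subseteq> S"
    unfolding zspan_def by blast
  have "\<forall>v\<in>F. \<exists>a. v = (\<lambda>k. \<Sum>j\<in>I. a j * f j k)"
    using F S zspan_image_iff[OF I] by blast
  then obtain A where A: "\<And>v. v \<in> F \<Longrightarrow> v = (\<lambda>k. \<Sum>j\<in>I. A v j * f j k)"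
    by metis
  have "x = (\<lambda>k. \<Sum>j\<in>I. (\<Sum>v\<in>F. c v * A v j) * f j k)"
  proof
    fix k
    have "x k = (\<Sum>v\<in>F. c v * (\<Sum>j\<in>I. A v j * f j k))"
      unfolding x
    proof (rule sum.cong[OF refl])
      fix v assume "v \<in> F"
      show "c v * v k = c v * (\<Sum>j\<in>I. A v j * f j k)"
        using fun_cong[OF A[OF \<open>v \<in> F\<close>], of k] by simp
    qed
    also have "\<dots> = (\<Sum>j\<in>I. (\<Sum>v\<in>F. c v * A v j) * f j k)"
      by (simp add: sum_distrib_left sum_distrib_right sum.swap[of _ F] mult.assoc)
    finally show "x k = (\<Sum>j\<in>I. (\<Sum>v\<in>F. c v * A v j) * f j k)" .
  qed
  then show "x \<in> zspan (f ` I)"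
    unfolding zspan_image_iff[OF I] by (intro exI[of _ "\<lambda>j. \<Sum>v\<in>F. c v * A v j"])
qed

lemma zspan_subset_Lam:
  assumes "S \<subseteq> Lam m p P"
  shows "zspan S \<subseteq> Lam m p P"
proof
  fix x assume "x \<in> zspan S"
  then obtain F c where x: "x = (\<lambda>k. \<Sum>v\<in>F. c v * v k)" and F: "F \<subseteq> S"
    unfolding zspan_def by blast
  have zvecs: "v \<in> zvecs m" and kernel: "vecmat m p P v = (\<lambda>_. 0)" if "v \<in> F" for v
    using assms F that unfolding Lam_def by auto
  have "x \<in> zvecs m"
    using zvecs unfolding x zvecs_def by (auto intro!: sum.neutral)
  moreover have "vecmat m p P x j = 0" for j
  proof -
    have "(\<Sum>r<m. real_of_int (x r) * P r j)
        = (\<Sum>v\<in>F. real_of_int (c v) * (\<Sum>r<m. real_of_int (v r) * P r j))"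
      unfolding x by (simp add: sum_distrib_left sum_distrib_right sum.swap[of _ F] mult.assoc)
    moreover have "(\<Sum>r<m. real_of_int (v r) * P r j) = 0" if "v \<in> F" "j < p" for v
      using fun_cong[OF kernel[OF that(1)], of j] that(2) by (simp add: vecmat_def)
    ultimately show ?thesis
      by (simp add: vecmat_def)
  qed
  ultimately show "x \<in> Lam m p P"
    unfolding Lam_def by auto
qed

lemma zindep_subset:
  assumes indep: "zindep I v" and "J \<subseteq> I" "finite I"
  shows "zindep J v"
  unfolding zindep_def
proof (intro allI impI)
  fix c assume c: "(\<lambda>k. \<Sum>i\<in>J. c i * v i k) = (\<lambda>_. 0)"
  define c' where "c' i = (if i \<in> J then c i else 0)" for i
  have "(\<lambda>k. \<Sum>i\<in>I. c' i * v i k) = (\<lambda>_. 0)"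
  proof
    fix k
    have "(\<Sum>i\<in>I. c' i * v i k) = (\<Sum>i\<in>J. c' i * v i k)"
      by (rule sum.mono_neutral_right) (use assms(2,3) in \<open>auto simp: c'_def\<close>)
    also have "\<dots> = (\<Sum>i\<in>J. c i * v i k)"
      by (rule sum.cong) (auto simp: c'_def)
    also have "\<dots> = 0"
      using fun_cong[OF c, of k] by simp
    finally show "(\<Sum>i\<in>I. c' i * v i k) = 0" .
  qed
  then have "c' i = 0" if "i \<in> I" for i
    using indep that unfolding zindep_def by blast
  then show "\<forall>i\<in>J. c i = 0"
    using assms(2) unfolding c'_def by (metis subsetD)
qed

lemma zindep_nonzero:
  assumes "zindep I v" "finite I" "j \<in> I"
  shows "v j \<noteq> (\<lambda>_. 0)"
proof
  assume "v j = (\<lambda>_. 0)"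
  moreover have "(\<Sum>i\<in>I. (if i = j then 1 else 0) * v i k) = (\<Sum>i\<in>I. if i = j then v i k else 0)" for k
    by (rule sum.cong) auto
  ultimately have "(\<lambda>k. \<Sum>i\<in>I. (if i = j then 1 else 0) * v i k) = (\<lambda>_. 0)"
    using assms(2,3) by simp
  then show False
    using assms(1,3) unfolding zindep_def by fastforce
qed

section \<open>The lattice \<open>R\<close>\<close>

text \<open>\<open>R_point m p Pb a = (a P_\<beta> | a)\<close> is the point of \<open>R\<close> with coordinates \<open>a\<close>
  with respect to the rows of \<open>[P_\<beta> | I_m]\<close>.\<close>

definition R_point :: "nat \<Rightarrow> nat \<Rightarrow> (nat \<Rightarrow> nat \<Rightarrow> int) \<Rightarrow> (nat \<Rightarrow> int) \<Rightarrow> (nat \<Rightarrow> int)" where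
  "R_point m p Pb a =
    (\<lambda>k. if k < p then (\<Sum>r<m. a r * Pb r k) else if k < p + m then a (k - p) else 0)"

lemma sum_Rrow_eq_R_point: "(\<lambda>k. \<Sum>r<m. a r * Rrow p Pb r k) = R_point m p Pb a"
proof
  fix k
  show "(\<Sum>r<m. a r * Rrow p Pb r k) = R_point m p Pb a k"
  proof (cases "k < p")
    case False
    then have "(\<Sum>r<m. a r * Rrow p Pb r k) = (\<Sum>r<m. if r = k - p then a r else 0)"
      unfolding Rrow_def by (intro sum.cong) auto
    with False show ?thesis
      unfolding R_point_def by auto
  qed (simp add: R_point_def Rrow_def)
qed

lemma lattice_R_iff: "x \<in> lattice_R m p Pb \<longleftrightarrow> (\<exists>a. x = R_point m p Pb a)"
  unfolding lattice_R_def zspan_image_iff[OF finite_lessThan] sum_Rrow_eq_R_point ..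

lemma pr_R_point: "pr m p (R_point m p Pb a) = (\<lambda>k. if k < m then a k else 0)"
  unfolding pr_def R_point_def by auto

lemma R_point_pr:
  assumes "x \<in> lattice_R m p Pb"
  shows "R_point m p Pb (pr m p x) = x"
proof -
  obtain a where x: "x = R_point m p Pb a"
    using assms lattice_R_iff by blast
  show ?thesis
    unfolding x pr_R_point unfolding R_point_def by (rule ext) (auto intro!: sum.cong)
qed

lemma R_point_combination:
  "(\<lambda>k. \<Sum>j\<in>J. c j * R_point m p Pb (a j) k) = R_point m p Pb (\<lambda>r. \<Sum>j\<in>J. c j * a j r)"
  unfolding R_point_def
  by (auto simp: sum_distrib_left sum_distrib_right sum.swap[of _ J] mult.assoc)

lemma lattice_R_vanishes:
  assumes "x \<in> lattice_R m p Pb" "p + m \<le> k"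
  shows "x k = 0"
  using assms unfolding lattice_R_iff R_point_def by auto

lemma zindep_pr_lattice_R:
  assumes "\<forall>j\<in>I. b j \<in> lattice_R m p Pb" "zindep I b"
  shows "zindep I (\<lambda>j. pr m p (b j))"
  unfolding zindep_def
proof (intro allI impI)
  fix c assume c: "(\<lambda>k. \<Sum>j\<in>I. c j * pr m p (b j) k) = (\<lambda>_. 0)"
  have "(\<lambda>k. \<Sum>j\<in>I. c j * b j k) = (\<lambda>k. \<Sum>j\<in>I. c j * R_point m p Pb (pr m p (b j)) k)"
    using assms(1) by (simp add: R_point_pr cong: sum.cong)
  also have "\<dots> = R_point m p Pb (\<lambda>_. 0)"
    unfolding R_point_combination c ..
  also have "\<dots> = (\<lambda>_. 0)"
    by (simp add: R_point_def fun_eq_iff)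
  finally show "\<forall>j\<in>I. c j = 0"
    using assms(2) unfolding zindep_def by blast
qed

lemma inorm_eq_L2_set: "inorm n x = L2_set (\<lambda>k. real_of_int (x k)) {..<n}"
  unfolding inorm_def L2_set_def by simp

lemma inorm_square: "(inorm n x)\<^sup>2 = (\<Sum>k<n. (real_of_int (x k))\<^sup>2)"
  unfolding inorm_def by (simp add: sum_nonneg)

lemma inorm_nonneg: "0 \<le> inorm n x"
  unfolding inorm_def by (simp add: sum_nonneg)

lemma sum_lessThan_add:
  fixes f :: "nat \<Rightarrow> 'a::comm_monoid_add"
  shows "(\<Sum>k<p + m. f k) = (\<Sum>k<p. f k) + (\<Sum>r<m. f (p + r))"
  by (induction m) (simp_all add: add.assoc)

lemma inorm_pr_le: "inorm m (pr m p x) \<le> inorm (p + m) x"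
  unfolding inorm_def pr_def by (simp add: sum_lessThan_add sum_nonneg)

lemma abs_le_inorm:
  assumes "k < n"
  shows "\<bar>real_of_int (x k)\<bar> \<le> inorm n x"
proof -
  have "(real_of_int (x k))\<^sup>2 \<le> (\<Sum>k<n. (real_of_int (x k))\<^sup>2)"
    using assms by (intro member_le_sum) auto
  then show ?thesis
    unfolding inorm_def by (metis real_sqrt_abs real_sqrt_le_mono)
qed

lemma inorm_eq_0_imp:
  assumes "inorm n x = 0" "k < n"
  shows "x k = 0"
  using abs_le_inorm[OF assms(2), of x] assms(1) by simp

lemma finite_inorm_le: "finite {u \<in> zvecs m. inorm m u \<le> B}"
proof (rule finite_subset)
  let ?N = "\<lceil>B\<rceil>"
  show "{u \<in> zvecs m. inorm m u \<le> B}
      \<subseteq> {f. \<forall>x. (x \<in> {..<m} \<longrightarrow> f x \<in> {-?N..?N}) \<and> (x \<notin> {..<m} \<longrightarrow> f x = 0)}"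
  proof clarify
    fix u x assume u: "u \<in> zvecs m" "inorm m u \<le> B"
    show "(x \<in> {..<m} \<longrightarrow> u x \<in> {-?N..?N}) \<and> (x \<notin> {..<m} \<longrightarrow> u x = 0)"
    proof (intro conjI impI)
      assume "x \<in> {..<m}"
      then have "\<bar>real_of_int (u x)\<bar> \<le> B"
        using abs_le_inorm[of x m u] u by auto
      then have "\<bar>real_of_int (u x)\<bar> \<le> real_of_int ?N"
        by linarith
      then show "u x \<in> {-?N..?N}"
        by auto
    next
      assume "x \<notin> {..<m}"
      then show "u x = 0"
        using u unfolding zvecs_def by auto
    qed
  qed
  show "finite {f. \<forall>x. (x \<in> {..<m} \<longrightarrow> f x \<in> {-?N..?N}) \<and> (x \<notin> {..<m} \<longrightarrow> f x = 0)}"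
    by (rule finite_set_of_finite_funs) auto
qed

lemma inorm_sorted_mono:
  fixes b :: "nat \<Rightarrow> nat \<Rightarrow> int" and j j' m :: nat
  assumes sorted: "\<forall>j. 1 \<le> j \<and> j < m \<longrightarrow> inorm n (b j) \<le> inorm n (b (j + 1))"
    and "1 \<le> j" "j \<le> j'" "j' \<le> m"
  shows "inorm n (b j) \<le> inorm n (b j')"
  using assms(3,4)
proof (induction j' rule: dec_induct)
  case (step k)
  then have "inorm n (b j) \<le> inorm n (b k)"
    by simp
  also have "\<dots> \<le> inorm n (b (k + 1))"
    using sorted assms(2) step by auto
  finally show ?case by simp
qed simp

lemma zbasis_lattice_R_inorm_pos:
  assumes "is_zbasis {1..m} b (lattice_R m p Pb)" "j \<in> {1..m}"
  shows "0 < inorm (p + m) (b j)"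
proof (rule ccontr)
  assume "\<not> 0 < inorm (p + m) (b j)"
  then have "inorm (p + m) (b j) = 0"
    using inorm_nonneg[of "p + m" "b j"] by linarith
  moreover have "b j \<in> lattice_R m p Pb"
    using assms unfolding is_zbasis_def by blast
  ultimately have "b j k = 0" for k
    using inorm_eq_0_imp lattice_R_vanishes by (cases "k < p + m") auto
  then have "b j = (\<lambda>_. 0)"
    by (simp add: fun_eq_iff)
  then show False
    using zindep_nonzero[of "{1..m}" b j] assms unfolding is_zbasis_def by blast
qed

section \<open>Rounding errors\<close>

lemma L2_set_le_sqrt_card_mult:
  assumes "\<And>k. k \<in> A \<Longrightarrow> \<bar>f k\<bar> \<le> c"
  shows "L2_set f A \<le> sqrt (card A) * c"
proof (cases "A = {}")
  case False
  then have "0 \<le> c"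
    using assms by (meson abs_ge_zero all_not_in_conv order_trans)
  have "L2_set f A = L2_set (\<lambda>k. \<bar>f k\<bar>) A"
    unfolding L2_set_def by simp
  also have "\<dots> \<le> L2_set (\<lambda>k. c) A"
    by (rule L2_set_mono) (auto simp: assms)
  also have "\<dots> = sqrt (card A) * c"
    using \<open>0 \<le> c\<close> by (simp add: L2_set_constant)
  finally show ?thesis .
qed simp

lemma L2_set_bounded_matrix_image_le:
  fixes v :: "nat \<Rightarrow> real"
  assumes "p \<le> m" and E: "\<And>r k. r < m \<Longrightarrow> k < p \<Longrightarrow> \<bar>E r k\<bar> \<le> 1/2"
  shows "L2_set (\<lambda>k. \<Sum>r<m. v r * E r k) {..<p} \<le> real m / 2 * L2_set v {..<m}"
proof -
  have entry: "\<bar>\<Sum>r<m. v r * E r k\<bar> \<le> 1/2 * (sqrt m * L2_set v {..<m})" if "k < p" for k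
  proof -
    have "\<bar>v r * E r k\<bar> \<le> \<bar>v r\<bar> * (1/2)" if "r < m" for r
      unfolding abs_mult by (rule mult_left_mono[OF E[OF that \<open>k < p\<close>]]) simp
    then have "\<bar>\<Sum>r<m. v r * E r k\<bar> \<le> (\<Sum>r<m. \<bar>v r\<bar> * (1/2))"
      by (intro order_trans[OF sum_abs] sum_mono) simp
    also have "\<dots> = 1/2 * (\<Sum>r<m. \<bar>v r\<bar> * \<bar>1\<bar>)"
      by (simp add: sum_distrib_left mult.commute)
    also have "(\<Sum>r<m. \<bar>v r\<bar> * \<bar>1::real\<bar>) \<le> L2_set v {..<m} * L2_set (\<lambda>_. 1) {..<m}"
      by (rule L2_set_mult_ineq)
    finally show ?thesis
      by (simp add: L2_set_constant mult.commute)
  qed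
  have "L2_set (\<lambda>k. \<Sum>r<m. v r * E r k) {..<p} \<le> sqrt p * (1/2 * (sqrt m * L2_set v {..<m}))"
    by (rule order_trans[OF L2_set_le_sqrt_card_mult[OF entry]]) simp_all
  also have "\<dots> \<le> sqrt m * (1/2 * (sqrt m * L2_set v {..<m}))"
    using \<open>p \<le> m\<close> by (intro mult_right_mono) (auto simp: L2_set_nonneg)
  finally show ?thesis
    by (simp flip: mult.assoc)
qed

lemma R_point_head_eq:
  assumes "k < p"
  shows "real_of_int (R_point m p Pb v k)
    = (\<Sum>r<m. real_of_int (v r) * (real_of_int (Pb r k) - beta * P r k)) + beta * vecmat m p P v k"
proof -
  have "(\<Sum>r<m. real_of_int (v r) * (real_of_int (Pb r k) - beta * P r k)) + beta * vecmat m p P v k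
      = (\<Sum>r<m. real_of_int (v r) * (real_of_int (Pb r k) - beta * P r k) + beta * (real_of_int (v r) * P r k))"
    using assms by (simp add: vecmat_def sum.distrib sum_distrib_left)
  also have "\<dots> = (\<Sum>r<m. real_of_int (v r) * real_of_int (Pb r k))"
    by (simp add: algebra_simps)
  finally show ?thesis
    using assms unfolding R_point_def by simp
qed

lemma R_point_sqnorm_le:
  assumes "p \<le> m" and E: "\<forall>r<m. \<forall>j<p. \<bar>real_of_int (Pb r j) - beta * P r j\<bar> \<le> 1/2"
    and u: "u \<in> Lam m p P"
  shows "(inorm (p + m) (R_point m p Pb u))\<^sup>2 \<le> (1 + (real m)\<^sup>2 / 4) * (inorm m u)\<^sup>2"
proof -
  define err where "err k = (\<Sum>r<m. real_of_int (u r) * (real_of_int (Pb r k) - beta * P r k))" for k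
  have kernel: "vecmat m p P u k = 0" for k
    using u unfolding Lam_def by simp
  have "(\<Sum>k<p. (real_of_int (R_point m p Pb u k))\<^sup>2) = (L2_set err {..<p})\<^sup>2"
    using R_point_head_eq[of _ p m Pb u beta P] unfolding L2_set_def err_def
    by (simp add: kernel sum_nonneg)
  also have "\<dots> \<le> (real m / 2 * inorm m u)\<^sup>2"
    unfolding err_def inorm_eq_L2_set using assms E
    by (intro power_mono L2_set_bounded_matrix_image_le) (auto simp: L2_set_nonneg)
  finally have head: "(\<Sum>k<p. (real_of_int (R_point m p Pb u k))\<^sup>2) \<le> (real m)\<^sup>2 / 4 * (inorm m u)\<^sup>2"
    by (simp add: power_mult_distrib power_divide)
  have tail: "(\<Sum>r<m. (real_of_int (R_point m p Pb u (p + r)))\<^sup>2) = (inorm m u)\<^sup>2"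
    unfolding inorm_square R_point_def by simp
  show ?thesis
    unfolding inorm_square[of "p + m"] sum_lessThan_add
    using head tail by (simp add: inorm_square algebra_simps)
qed

lemma lll_basis_sqnorm_le_combination:
  fixes b :: "nat \<Rightarrow> nat \<Rightarrow> int" and c :: "nat \<Rightarrow> int"
  assumes lll: "lll_reduced n (3/4) (map (\<lambda>j k. real_of_int (b j k)) [1..<m+1])"
    and J: "J \<in> {1..m}" "c J \<noteq> 0" and zero: "\<forall>j. J < j \<and> j \<le> m \<longrightarrow> c j = 0"
  shows "(inorm n (b J))\<^sup>2 \<le> 2 ^ (J - 1) * (inorm n (\<lambda>k. \<Sum>j\<in>{1..m}. c j * b j k))\<^sup>2"
proof -
  define vs where "vs = map (\<lambda>j k. real_of_int (b j k)) [1..<m+1]"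
  define d where "d t = real_of_int (c (Suc t))" for t
  have "length vs = m"
    unfolding vs_def by simp
  have vs_nth: "vs ! t = (\<lambda>k. real_of_int (b (Suc t) k))" if "t < m" for t
    unfolding vs_def using that by (simp del: upt_Suc)
  have sqnorm: "rinner n (\<lambda>k. real_of_int (y k)) (\<lambda>k. real_of_int (y k)) = (inorm n y)\<^sup>2" for y
    unfolding inorm_square rinner_def by (simp add: power2_eq_square)
  have combination: "(\<lambda>k. \<Sum>t<length vs. d t * (vs ! t) k)
      = (\<lambda>k. real_of_int (\<Sum>j\<in>{1..m}. c j * b j k))"
    using \<open>length vs = m\<close> by (simp add: d_def vs_nth sum.atLeast1_atMost_eq)
  have "(inorm n (b J))\<^sup>2 = rinner n (vs ! (J - 1)) (vs ! (J - 1))"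
  proof -
    have "J - 1 < m" "Suc (J - 1) = J"
      using J by auto
    then show ?thesis
      using vs_nth[of "J - 1"] sqnorm[of "b J"] by simp
  qed
  also have "\<dots> \<le> 2 ^ (J - 1) *
      rinner n (\<lambda>k. \<Sum>t<length vs. d t * (vs ! t) k) (\<lambda>k. \<Sum>t<length vs. d t * (vs ! t) k)"
    unfolding vs_def
    by (rule lll_sqnorm_le_combination[OF lll]) (use J zero \<open>length vs = m\<close> in \<open>auto simp: vs_def d_def\<close>)
  also have "\<dots> = 2 ^ (J - 1) * (inorm n (\<lambda>k. \<Sum>j\<in>{1..m}. c j * b j k))\<^sup>2"
    unfolding combination sqnorm ..
  finally show ?thesis .
qed

lemma lll_short_mem_prefix_span:
  fixes b :: "nat \<Rightarrow> nat \<Rightarrow> int"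
  assumes lll: "lll_reduced n (3/4) (map (\<lambda>j k. real_of_int (b j k)) [1..<m+1])"
    and sorted: "\<forall>j. 1 \<le> j \<and> j < m \<longrightarrow> inorm n (b j) \<le> inorm n (b (j + 1))"
    and "i < m" and x: "x \<in> zspan (b ` {1..m})"
    and short: "2 ^ (m - 1) * (inorm n x)\<^sup>2 < (inorm n (b (i + 1)))\<^sup>2"
  shows "x \<in> zspan (b ` {1..i})"
proof -
  obtain c where x: "x = (\<lambda>k. \<Sum>j\<in>{1..m}. c j * b j k)"
    using x zspan_image_iff[of "{1..m}"] by auto
  have "c j = 0" if "i < j" "j \<le> m" for j
  proof (rule ccontr)
    let ?S = "{j. i < j \<and> j \<le> m \<and> c j \<noteq> 0}"
    define J where "J = Max ?S"
    assume "c j \<noteq> 0"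
    have "finite ?S"
      by (rule finite_subset[of _ "{..m}"]) auto
    moreover have "j \<in> ?S"
      using that \<open>c j \<noteq> 0\<close> by simp
    ultimately have "J \<in> ?S"
      unfolding J_def by (intro Max_in) auto
    have zero: "\<forall>j'. J < j' \<and> j' \<le> m \<longrightarrow> c j' = 0"
    proof (intro allI impI)
      fix j' assume j': "J < j' \<and> j' \<le> m"
      show "c j' = 0"
      proof (rule ccontr)
        assume "c j' \<noteq> 0"
        with j' \<open>J \<in> ?S\<close> have "j' \<le> J"
          unfolding J_def using \<open>finite ?S\<close> by (intro Max_ge) auto
        with j' show False by simp
      qed
    qed
    have "(inorm n (b (i + 1)))\<^sup>2 \<le> (inorm n (b J))\<^sup>2"
      using \<open>J \<in> ?S\<close> inorm_sorted_mono[OF sorted, of "i + 1" J]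
      by (intro power_mono inorm_nonneg) auto
    also have "\<dots> \<le> 2 ^ (J - 1) * (inorm n x)\<^sup>2"
      unfolding x using \<open>J \<in> ?S\<close> zero by (intro lll_basis_sqnorm_le_combination[OF lll]) auto
    also have "\<dots> \<le> 2 ^ (m - 1) * (inorm n x)\<^sup>2"
      using \<open>J \<in> ?S\<close> by (intro mult_right_mono power_increasing) auto
    finally show False
      using short by simp
  qed
  then have "x = (\<lambda>k. \<Sum>j\<in>{1..i}. c j * b j k)"
    unfolding x using \<open>i < m\<close> by (intro ext sum.mono_neutral_right) auto
  then show ?thesis
    using zspan_image_iff[of "{1..i}"] by blast
qed

section \<open>The functions \<open>\<epsilon>\<close> and \<open>\<phi>\<close>\<close>

lemma eps_attained:
  assumes "v \<in> zvecs m" "inorm m v \<le> B" "vecmat m p P v \<noteq> (\<lambda>_. 0)"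
  obtains e where "eps m p P B = ereal e" "0 < e" "e \<le> rnorm p (vecmat m p P v)"
proof -
  define X where "X = {rnorm p (vecmat m p P u) | u.
      u \<in> zvecs m \<and> inorm m u \<le> B \<and> vecmat m p P u \<noteq> (\<lambda>_. 0)}"
  have v: "rnorm p (vecmat m p P v) \<in> X"
    unfolding X_def using assms by blast
  have "X \<subseteq> (\<lambda>u. rnorm p (vecmat m p P u)) ` {u \<in> zvecs m. inorm m u \<le> B}"
    unfolding X_def by blast
  then have "finite X"
    using finite_inorm_le finite_subset by blast
  have pos: "0 < x" if "x \<in> X" for x
  proof -
    obtain u where x: "x = rnorm p (vecmat m p P u)" and "vecmat m p P u \<noteq> (\<lambda>_. 0)"
      using \<open>x \<in> X\<close> unfolding X_def by blast
    then obtain k where k: "vecmat m p P u k \<noteq> 0"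
      by blast
    then have "k < p"
      unfolding vecmat_def by (auto split: if_splits)
    then have "0 < (\<Sum>k<p. (vecmat m p P u k)\<^sup>2)"
      using k by (intro sum_pos2[of _ k]) auto
    then show "0 < x"
      unfolding x rnorm_def rinner_def by (simp add: power2_eq_square)
  qed
  have "eps m p P B = ereal (Min X)"
    unfolding eps_def X_def[symmetric] using \<open>finite X\<close> v
    by (intro antisym Inf_lower Inf_greatest imageI Min_in) auto
  moreover have "0 < Min X"
    using \<open>finite X\<close> v pos by (metis Min_in empty_iff)
  moreover have "Min X \<le> rnorm p (vecmat m p P v)"
    using \<open>finite X\<close> v by simp
  ultimately show ?thesis
    using that by blast
qed

lemma phi_gt_obtains:
  assumes "ereal c < phi m p P s"
  obtains B where "c < B"
    and "\<And>v. v \<in> zvecs m \<Longrightarrow> inorm m v \<le> B \<Longrightarrow> vecmat m p P v \<noteq> (\<lambda>_. 0) \<Longrightarrow>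
      real m * B \<le> s * rnorm p (vecmat m p P v)"
proof -
  obtain B where "c < B" "0 \<le> B" and B:
    "(if eps m p P B = \<infinity> then 0 else real m * B / real_of_ereal (eps m p P B)) \<le> s"
    using assms unfolding phi_def less_Sup_iff by auto
  have "real m * B \<le> s * rnorm p (vecmat m p P v)"
    if v: "v \<in> zvecs m" "inorm m v \<le> B" "vecmat m p P v \<noteq> (\<lambda>_. 0)" for v
  proof -
    obtain e where e: "eps m p P B = ereal e" "0 < e" "e \<le> rnorm p (vecmat m p P v)"
      using eps_attained[OF v] by blast
    have quotient: "real m * B / e \<le> s"
      using B e(1) by simp
    have "real m * B \<le> s * e"
      using quotient e(2) by (simp add: divide_le_eq)
    also have "\<dots> \<le> s * rnorm p (vecmat m p P v)"
    proof (rule mult_left_mono)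
      have "0 \<le> real m * B / e"
        using e(2) \<open>0 \<le> B\<close> by simp
      then show "0 \<le> s"
        using quotient by linarith
    qed (use e in simp)
    finally show ?thesis .
  qed
  then show ?thesis
    using that \<open>c < B\<close> by blast
qed

lemma pr_mem_Lam_if_short:
  assumes m: "2 \<le> m" and "p \<le> m" and "0 < beta"
    and E: "\<forall>r<m. \<forall>j<p. \<bar>real_of_int (Pb r j) - beta * P r j\<bar> \<le> 1/2"
    and x: "x \<in> lattice_R m p Pb" and short: "ereal (inorm (p + m) x) < phi m p P beta"
  shows "pr m p x \<in> Lam m p P"
proof (rule ccontr)
  let ?v = "pr m p x"
  define err where "err k = (\<Sum>r<m. real_of_int (?v r) * (real_of_int (Pb r k) - beta * P r k))" for k
  have "?v \<in> zvecs m"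
    unfolding pr_def zvecs_def by simp
  moreover assume "?v \<notin> Lam m p P"
  ultimately have nonzero: "vecmat m p P ?v \<noteq> (\<lambda>_. 0)"
    unfolding Lam_def by blast
  obtain B where "inorm (p + m) x < B" and B:
    "\<And>v. v \<in> zvecs m \<Longrightarrow> inorm m v \<le> B \<Longrightarrow> vecmat m p P v \<noteq> (\<lambda>_. 0) \<Longrightarrow>
      real m * B \<le> beta * rnorm p (vecmat m p P v)"
    using phi_gt_obtains[OF short] by blast
  have "real m * B \<le> beta * rnorm p (vecmat m p P ?v)"
    using B[OF \<open>?v \<in> zvecs m\<close> _ nonzero] inorm_pr_le[of m p x] \<open>inorm (p + m) x < B\<close> by simp
  also have "\<dots> = L2_set (\<lambda>k. beta * vecmat m p P ?v k) {..<p}"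
    unfolding rnorm_eq_L2_set using \<open>0 < beta\<close> by (simp add: L2_set_right_distrib)
  also have "\<dots> = L2_set (\<lambda>k. real_of_int (x k) + - err k) {..<p}"
  proof (rule L2_set_cong[OF refl])
    fix k assume "k \<in> {..<p}"
    then show "beta * vecmat m p P ?v k = real_of_int (x k) + - err k"
      using R_point_head_eq[of k p m Pb ?v beta P] R_point_pr[OF x] unfolding err_def by simp
  qed
  also have "\<dots> \<le> L2_set (\<lambda>k. real_of_int (x k)) {..<p} + L2_set err {..<p}"
    using L2_set_triangle_ineq[of "\<lambda>k. real_of_int (x k)" "\<lambda>k. - err k" "{..<p}"]
    by (simp add: L2_set_def)
  also have "L2_set (\<lambda>k. real_of_int (x k)) {..<p} \<le> inorm (p + m) x"
    unfolding inorm_def L2_set_def by (simp add: sum_lessThan_add sum_nonneg)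
  also have "L2_set err {..<p} \<le> real m / 2 * inorm (p + m) x"
  proof -
    have "L2_set err {..<p} \<le> real m / 2 * inorm m ?v"
      unfolding err_def inorm_eq_L2_set using assms by (intro L2_set_bounded_matrix_image_le) auto
    also have "\<dots> \<le> real m / 2 * inorm (p + m) x"
      by (intro mult_left_mono inorm_pr_le) simp
    finally show ?thesis .
  qed
  finally have "real m * B \<le> (1 + real m / 2) * inorm (p + m) x"
    by (simp add: algebra_simps)
  also have "\<dots> \<le> real m * inorm (p + m) x"
    using m by (intro mult_right_mono inorm_nonneg) auto
  finally show False
    using m \<open>inorm (p + m) x < B\<close> by simp
qed

lemma kappa_bound:
  assumes "2 \<le> m"
  shows "(1 + (real m)\<^sup>2 / 4) * (kappa m)\<^sup>2 * 2 ^ (m - 1) < 1"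
proof -
  have "(2 powr (- (real m + 1) / 2))\<^sup>2 = (2::real) powr (- (real m + 1))"
    by (simp add: power2_eq_square flip: powr_add)
  then have kappa_square: "(kappa m)\<^sup>2 = 1 / (real m)\<^sup>2 * 2 powr (- (real m + 1))"
    unfolding kappa_def by (simp add: power_mult_distrib power_divide)
  have "(2::real) ^ (m - 1) = 2 powr (real (m - 1))"
    by (simp add: powr_realpow)
  then have "(2::real) powr (- (real m + 1)) * 2 ^ (m - 1) = 2 powr (-2)"
    using assms by (simp add: of_nat_diff flip: powr_add)
  then have powers: "(2::real) powr (- (real m + 1)) * 2 ^ (m - 1) = 1/4"
    by (simp add: powr_minus powr_numeral)
  have "4 \<le> (real m)\<^sup>2"
    using assms power_mono[of 2 "real m" 2] by simp
  have "(1 + (real m)\<^sup>2 / 4) * (kappa m)\<^sup>2 * 2 ^ (m - 1)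
      = (1 + (real m)\<^sup>2 / 4) / (real m)\<^sup>2 * (2 powr (- (real m + 1)) * 2 ^ (m - 1))"
    unfolding kappa_square by simp
  also have "\<dots> = (1 + (real m)\<^sup>2 / 4) / (4 * (real m)\<^sup>2)"
    unfolding powers by simp
  also have "\<dots> < 1"
    using \<open>4 \<le> (real m)\<^sup>2\<close> by (simp add: divide_less_eq)
  finally show ?thesis .
qed

lemma Lam_short_mem_span_pr:
  fixes b :: "nat \<Rightarrow> nat \<Rightarrow> int"
  assumes m: "2 \<le> m" "p \<le> m"
    and E: "\<forall>r<m. \<forall>j<p. \<bar>real_of_int (Pb r j) - beta * P r j\<bar> \<le> 1/2"
    and basis: "is_zbasis {1..m} b (lattice_R m p Pb)"
    and lll: "lll_reduced (p + m) (3/4) (map (\<lambda>j k. real_of_int (b j k)) [1..<m+1])"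
    and sorted: "\<forall>j. 1 \<le> j \<and> j < m \<longrightarrow> inorm (p + m) (b j) \<le> inorm (p + m) (b (j + 1))"
    and "i < m" and u: "u \<in> Lam m p P" "inorm m u \<le> kappa m * inorm (p + m) (b (i + 1))"
  shows "u \<in> zspan ((\<lambda>j. pr m p (b j)) ` {1..i})"
proof -
  let ?B = "inorm (p + m) (b (i + 1))"
  let ?x = "R_point m p Pb u"
  have "0 < ?B"
    using zbasis_lattice_R_inorm_pos[OF basis] \<open>i < m\<close> by simp
  have "2 ^ (m - 1) * (inorm (p + m) ?x)\<^sup>2 \<le> 2 ^ (m - 1) * ((1 + (real m)\<^sup>2 / 4) * (inorm m u)\<^sup>2)"
    using R_point_sqnorm_le[OF m(2) E u(1)] by simp
  also have "\<dots> \<le> 2 ^ (m - 1) * ((1 + (real m)\<^sup>2 / 4) * (kappa m * ?B)\<^sup>2)"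
    using u(2) by (intro mult_left_mono power_mono inorm_nonneg) simp_all
  also have "\<dots> = ((1 + (real m)\<^sup>2 / 4) * (kappa m)\<^sup>2 * 2 ^ (m - 1)) * ?B\<^sup>2"
    by (simp add: power_mult_distrib)
  also have "\<dots> < ?B\<^sup>2"
    using kappa_bound[OF m(1)] \<open>0 < ?B\<close> by simp
  finally have "?x \<in> zspan (b ` {1..i})"
    using basis lattice_R_iff[of ?x m p Pb] unfolding is_zbasis_def
    by (intro lll_short_mem_prefix_span[OF lll sorted \<open>i < m\<close>]) auto
  then obtain c where x: "?x = (\<lambda>k. \<Sum>j\<in>{1..i}. c j * b j k)"
    using zspan_image_iff[of "{1..i}"] by blast
  have "u = pr m p ?x"
    using u(1) unfolding pr_R_point Lam_def zvecs_def by auto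
  also have "\<dots> = (\<lambda>k. \<Sum>j\<in>{1..i}. c j * pr m p (b j) k)"
    unfolding x pr_def by auto
  finally show ?thesis
    using zspan_image_iff[of "{1..i}"] by blast
qed

lemma zbasis_pr_Lam:
  fixes b :: "nat \<Rightarrow> nat \<Rightarrow> int"
  assumes m: "2 \<le> m" "p \<le> m" and beta: "0 < beta"
    and E: "\<forall>r<m. \<forall>j<p. \<bar>real_of_int (Pb r j) - beta * P r j\<bar> \<le> 1/2"
    and basis: "is_zbasis {1..m} b (lattice_R m p Pb)"
    and lll: "lll_reduced (p + m) (3/4) (map (\<lambda>j k. real_of_int (b j k)) [1..<m+1])"
    and sorted: "\<forall>j. 1 \<le> j \<and> j < m \<longrightarrow> inorm (p + m) (b j) \<le> inorm (p + m) (b (j + 1))"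
    and i: "i < m"
    and generated: "Lam m p P = zspan {x \<in> Lam m p P. inorm m x \<le> kappa m * inorm (p + m) (b (i + 1))}"
    and phi: "ereal (Bseq (p + m) b i) < phi m p P beta"
  shows "is_zbasis {1..i} (\<lambda>j. pr m p (b j)) (Lam m p P)"
proof -
  let ?L = "Lam m p P" and ?b' = "\<lambda>j. pr m p (b j)"
  have in_R: "\<forall>j\<in>{1..m}. b j \<in> lattice_R m p Pb" and indep: "zindep {1..m} b"
    using basis unfolding is_zbasis_def by blast+
  have mem: "?b' j \<in> ?L" if "j \<in> {1..i}" for j
  proof (rule pr_mem_Lam_if_short[OF m beta E])
    show "b j \<in> lattice_R m p Pb"
      using in_R that i by simp
    have "inorm (p + m) (b j) \<le> Bseq (p + m) b i"
      using inorm_sorted_mono[OF sorted, of j i] that i by (simp add: Bseq_def)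
    then show "ereal (inorm (p + m) (b j)) < phi m p P beta"
      using phi by (meson ereal_less_eq(3) le_less_trans)
  qed
  then have "zspan (?b' ` {1..i}) \<subseteq> ?L"
    by (intro zspan_subset_Lam) auto
  moreover have "zspan {x \<in> ?L. inorm m x \<le> kappa m * inorm (p + m) (b (i + 1))} \<subseteq> zspan (?b' ` {1..i})"
    using Lam_short_mem_span_pr[OF m E basis lll sorted i] by (intro zspan_subset_zspan_image) auto
  then have "?L \<subseteq> zspan (?b' ` {1..i})"
    by (simp only: generated[symmetric])
  moreover have "zindep {1..i} ?b'"
  proof (rule zindep_pr_lattice_R[of "{1..i}" b m p Pb])
    show "\<forall>j\<in>{1..i}. b j \<in> lattice_R m p Pb"
      using in_R i by simp
    show "zindep {1..i} b"
      using indep by (rule zindep_subset) (use i in auto)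
  qed
  ultimately show ?thesis
    unfolding is_zbasis_def using mem by blast
qed

theorem proposition4p1:
  fixes m p :: nat and P :: "nat \<Rightarrow> nat \<Rightarrow> real" and beta :: real
    and Pb :: "nat \<Rightarrow> nat \<Rightarrow> int" and b :: "nat \<Rightarrow> nat \<Rightarrow> int" and i :: nat
  assumes "2 \<le> m" and "1 \<le> p" and "p \<le> m" and "beta > 0"
    and "\<forall>r<m. \<forall>j<p. \<bar>real_of_int (Pb r j) - beta * P r j\<bar> \<le> 1/2"
    and "is_zbasis {1..m} b (lattice_R m p Pb)"
    and "lll_reduced (p + m) (3/4) (map (\<lambda>j k. real_of_int (b j k)) [1..<m+1])"
    and "\<forall>j. 1 \<le> j \<and> j < m \<longrightarrow> inorm (p + m) (b j) \<le> inorm (p + m) (b (j + 1))"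
    and "i < m"
    and "Bseq (p + m) b i \<le> kappa m * Bseq (p + m) b (i + 1)"
  shows "is_zbasis {1..i} (\<lambda>j. pr m p (b j)) (Lam m p P)
       \<or> Lam m p P \<noteq> zspan {x \<in> Lam m p P. inorm m x \<le> kappa m * Bseq (p + m) b (i + 1)}
       \<or> phi m p P beta \<le> ereal (Bseq (p + m) b i)"
proof -
  have "is_zbasis {1..i} (\<lambda>j. pr m p (b j)) (Lam m p P)"
    if "Lam m p P = zspan {x \<in> Lam m p P. inorm m x \<le> kappa m * Bseq (p + m) b (i + 1)}"
      and "ereal (Bseq (p + m) b i) < phi m p P beta"
    using zbasis_pr_Lam[OF assms(1,3-9)] that by (simp add: Bseq_def)
  then show ?thesis
    using not_le by blast
qed

end
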